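(* Suppose that a concave kite central configuration of the planar Newtonian 4-body problem has two pairs of equal masses, with mass values $1$ and $m>0$. Then one pair of equal masses lies at the endpoints of the base of an isosceles triangle, and the other pair lies on the symmetry axis of the base, with one body of this pair inside the triangle formed by the other three bodies.
   Context: Bodies with positive masses $m_i$ at positions $q_i\in\mathbb{R}^2$, $i=1,\dots,4$, with $r_{ij}=|q_i-q_j|$. A configuration is a central configuration if there is a constant $\lambda$ with $-\lambda m_j(q_j-c)=\sum_{i\neq j} m_im_j(q_i-q_j)/r_{ij}^3$ for all $j$, where $c=\sum m_iq_i/\sum m_i$. A non-collinear configuration is a kite if it has a symmetry axis passing through two of the four bodies; it is concave if one body lies inside the triangle formed by the other three. *)

theory Defs
  imports "HOL-Analysis.Analysis"
begin

definition center_of_mass :: "(nat \<Rightarrow> real) \<Rightarrow> (nat \<Rightarrow> complex) \<Rightarrow> complex" where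
  "center_of_mass m q = (1 / (\<Sum>i<4. m i)) *\<^sub>R (\<Sum>i<4. m i *\<^sub>R q i)"

definition central_configuration :: "(nat \<Rightarrow> real) \<Rightarrow> (nat \<Rightarrow> complex) \<Rightarrow> bool" where
  "central_configuration m q \<longleftrightarrow>
     (\<forall>i<4. \<forall>j<4. i \<noteq> j \<longrightarrow> q i \<noteq> q j) \<and>
     (\<exists>lam::real. \<forall>j<4.
        - (lam * m j) *\<^sub>R (q j - center_of_mass m q) =
        (\<Sum>i\<in>{..<4} - {j}. (m i * m j / (cmod (q i - q j)) ^ 3) *\<^sub>R (q i - q j)))"

definition reflect_line :: "complex \<Rightarrow> complex \<Rightarrow> complex \<Rightarrow> complex" where
  "reflect_line a b z = a + (b - a) * cnj ((z - a) / (b - a))"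

definition is_kite :: "(nat \<Rightarrow> complex) \<Rightarrow> bool" where
  "is_kite q \<longleftrightarrow> \<not> collinear (q ` {..<4}) \<and>
     (\<exists>a<4. \<exists>b<4. a \<noteq> b \<and> q a \<noteq> q b \<and>
        reflect_line (q a) (q b) ` (q ` {..<4}) = q ` {..<4})"

definition is_concave :: "(nat \<Rightarrow> complex) \<Rightarrow> bool" where
  "is_concave q \<longleftrightarrow> (\<exists>i<4. q i \<in> interior (convex hull (q ` ({..<4} - {i}))))"

end

theory Submission
  imports Defs
begin

text \<open>
  The reflection in the symmetry axis of the kite fixes the two bodies a, b on the axis and
  swaps the other two, c and d, which therefore lie strictly on opposite sides of the axis.
  Consequently neither c nor d lies in the triangle of the other three bodies, so the interior
  body is on the axis. Divide the central configuration equations of a and b by their masses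
  and take components normal to the axis. The left-hand sides -\<lambda> (q j - center) agree,
  because q a - q b is parallel to the axis; by the symmetry the right-hand sides are
  (m c - m d) h / r^3, where h \<noteq> 0 is the distance of c from the axis and r its distance to
  a, resp. to b. So either m c = m d, or c is equidistant from a and b. In the latter case
  the kite is a rhombus, and no vertex of a rhombus lies in the triangle of the other three.
  Hence m c = m d, and the mass pattern 1, 1, \<mu>, \<mu> forces m a = m b.
\<close>

lemma reflect_line_coord:
  assumes "p \<noteq> p'"
  shows "(reflect_line p p' x - p) / (p' - p) = cnj ((x - p) / (p' - p))"
  using assms by (simp add: reflect_line_def)

lemma reflect_line_commute: "reflect_line p' p = reflect_line p p'"
proof
  fix x
  show "reflect_line p' p x = reflect_line p p' x"
  proof (cases "p = p'")
    case False
    define w where "w = (x - p) / (p' - p)"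
    have "(x - p') / (p - p') = 1 - w"
      using False by (simp add: w_def field_simps)
    then have "reflect_line p' p x = p' + (p - p') * (1 - cnj w)"
      by (simp add: reflect_line_def)
    also have "\<dots> = p + (p' - p) * cnj w"
      by (simp add: algebra_simps)
    finally show ?thesis
      by (simp add: reflect_line_def w_def)
  qed (simp add: reflect_line_def)
qed

lemma reflect_line_fixes_left [simp]: "reflect_line p p' p = p"
  by (simp add: reflect_line_def)

lemma reflect_line_fixes_right [simp]: "reflect_line p p' p' = p'"
  by (metis reflect_line_commute reflect_line_fixes_left)

lemma reflect_line_involutive:
  assumes "p \<noteq> p'"
  shows "reflect_line p p' (reflect_line p p' x) = x"
  using assms by (simp add: reflect_line_def)

lemma dist_reflect_line:
  assumes "p \<noteq> p'"
  shows "dist (reflect_line p p' x) (reflect_line p p' y) = dist x y"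
proof -
  have "reflect_line p p' x - reflect_line p p' y = (p' - p) * cnj ((x - y) / (p' - p))"
    unfolding reflect_line_def diff_divide_distrib complex_cnj_diff by algebra
  then have "dist (reflect_line p p' x) (reflect_line p p' y) = cmod (p' - p) * cmod ((x - y) / (p' - p))"
    by (simp only: dist_norm norm_mult complex_mod_cnj)
  then show ?thesis
    using assms by (simp add: dist_norm norm_divide)
qed

lemma Re_reflect_line:
  assumes "p \<noteq> p'"
  shows "Re ((reflect_line p p' x - p) / (p' - p)) = Re ((x - p) / (p' - p))"
  using reflect_line_coord[OF assms, of x] by (simp del: complex_cnj_divide complex_cnj_diff)

lemma Im_reflect_line:
  assumes "p \<noteq> p'"
  shows "Im ((reflect_line p p' x - p) / (p' - p)) = - Im ((x - p) / (p' - p))"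
  using reflect_line_coord[OF assms, of x] by (simp del: complex_cnj_divide complex_cnj_diff)

lemma reflect_line_fixed_iff:
  assumes "p \<noteq> p'"
  shows "reflect_line p p' x = x \<longleftrightarrow> Im ((x - p) / (p' - p)) = 0"
proof -
  have "reflect_line p p' x = x \<longleftrightarrow> (reflect_line p p' x - p) / (p' - p) = (x - p) / (p' - p)"
    using assms by simp
  also have "\<dots> \<longleftrightarrow> Im ((x - p) / (p' - p)) = 0"
    using Re_reflect_line[OF assms, of x] Im_reflect_line[OF assms, of x]
    unfolding complex_eq_iff by auto
  finally show ?thesis .
qed

lemma reflect_line_fixed_imp_affine_hull:
  assumes "p \<noteq> p'" "reflect_line p p' x = x"
  shows "x \<in> affine hull {p, p'}"
proof -
  define t where "t = Re ((x - p) / (p' - p))"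
  have "(x - p) / (p' - p) = of_real t"
    using reflect_line_fixed_iff[OF assms(1), of x] assms(2) by (simp add: t_def complex_eq_iff)
  then have "x - p = of_real t * (p' - p)"
    using assms(1) by (simp add: divide_eq_eq)
  then have "x = (1 - t) *\<^sub>R p + t *\<^sub>R p'"
    by (simp add: scaleR_conv_of_real algebra_simps)
  then show ?thesis
    unfolding affine_hull_2 by fastforce
qed

lemma dist_axis_reflect_line:
  assumes "p \<noteq> p'"
  shows "dist p (reflect_line p p' x) = dist p x" "dist p' (reflect_line p p' x) = dist p' x"
  using dist_reflect_line[OF assms, of p x] dist_reflect_line[OF assms, of p' x] by simp_all

lemma reflect_line_swaps_off_axis:
  assumes distinct: "distinct [p, p', x, y]"
    and noncollinear: "\<not> collinear {p, p', x, y}"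
    and invariant: "reflect_line p p' ` {p, p', x, y} = {p, p', x, y}"
  shows "reflect_line p p' x = y"
proof -
  let ?\<rho> = "reflect_line p p'"
  have pp': "p \<noteq> p'" using distinct by simp
  have off_axis: "?\<rho> w \<notin> {p, p'}" if "w \<notin> {p, p'}" for w
    using that reflect_line_involutive[OF pp', of w] by auto
  have x_moved: "?\<rho> x \<noteq> x"
  proof
    assume x_fixed: "?\<rho> x = x"
    have "?\<rho> y \<in> {p, p', x, y}" using invariant by blast
    moreover have "?\<rho> y \<noteq> x"
      using x_fixed distinct reflect_line_involutive[OF pp', of y] by auto
    ultimately have "?\<rho> y = y" using off_axis[of y] distinct by auto
    then have "{p, p', x, y} \<subseteq> affine hull {p, p'}"
      using x_fixed reflect_line_fixed_imp_affine_hull[OF pp'] by (auto intro: hull_inc)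
    then show False
      using noncollinear collinear_subset collinear_affine_hull_collinear collinear_2 by blast
  qed
  have "?\<rho> x \<in> {p, p', x, y}" using invariant by blast
  then show ?thesis using off_axis[of x] x_moved distinct by auto
qed

lemma convex_hull_linear_le_generator:
  fixes f :: "'a::real_vector \<Rightarrow> real"
  assumes "linear f" "y \<in> convex hull S"
  shows "\<exists>x\<in>S. f y \<le> f x"
proof (rule ccontr)
  assume "\<not> (\<exists>x\<in>S. f y \<le> f x)"
  then have "S \<subseteq> f -` {..<f y}" by (auto simp: not_le)
  then have "convex hull S \<subseteq> f -` {..<f y}"
    by (intro hull_minimal convex_linear_vimage assms(1) convex_real_interval)
  then show False using assms(2) by auto
qed

lemma convex_hull_linear_ge_generator:
  fixes f :: "'a::real_vector \<Rightarrow> real"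
  assumes "linear f" "y \<in> convex hull S"
  shows "\<exists>x\<in>S. f x \<le> f y"
  using convex_hull_linear_le_generator[of "\<lambda>x. - f x", OF linear_compose_neg[OF assms(1)] assms(2)]
  by auto

lemma linear_Im_divide: "linear (\<lambda>x. Im (x / u))"
  by (intro bounded_linear.linear bounded_linear_compose[OF bounded_linear_Im] bounded_linear_divide)

lemma linear_Re_divide: "linear (\<lambda>x. Re (x / u))"
  by (intro bounded_linear.linear bounded_linear_compose[OF bounded_linear_Re] bounded_linear_divide)

lemma reflect_line_mirror_not_in_convex_hull:
  assumes pp': "p \<noteq> p'" and mirror: "reflect_line p p' x = y" and "x \<noteq> y"
  shows "x \<notin> convex hull {p, p', y}"
proof
  assume hull: "x \<in> convex hull {p, p', y}"
  define u where "u = p' - p"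
  define h where "h w = Im ((w - p) / u)" for w
  have h_y: "h y = - h x"
    using Im_reflect_line[OF pp', of x] mirror by (simp add: h_def u_def)
  have h_x: "h x \<noteq> 0"
    using reflect_line_fixed_iff[OF pp', of x] mirror \<open>x \<noteq> y\<close> by (simp add: h_def u_def)
  have h_axis: "h p = 0" "h p' = 0"
    using pp' by (simp_all add: h_def u_def)
  have "Im (w / u) = Im (p / u) + h w" for w
    by (simp add: h_def diff_divide_distrib)
  then have "\<exists>w\<in>{p, p', y}. h x \<le> h w" "\<exists>w\<in>{p, p', y}. h w \<le> h x"
    using convex_hull_linear_le_generator[OF linear_Im_divide hull]
      convex_hull_linear_ge_generator[OF linear_Im_divide hull] by (metis add_le_cancel_left)+
  then show False
    using h_y h_x h_axis by auto
qed

lemma reflect_line_axis_point_not_in_convex_hull: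
  assumes pp': "p \<noteq> p'" and mirror: "reflect_line p p' x = y"
    and equidistant: "dist p x = dist p' x"
  shows "p \<notin> convex hull {p', x, y}"
proof
  assume hull: "p \<in> convex hull {p', x, y}"
  define u where "u = p' - p"
  define g where "g w = Re ((w - p) / u)" for w
  have g_y: "g y = g x"
    using Re_reflect_line[OF pp', of x] mirror by (simp add: g_def u_def)
  have "cmod u * cmod ((x - p) / u) = cmod u * cmod ((x - p) / u - 1)"
    using equidistant pp' by (simp add: u_def dist_norm norm_minus_commute norm_divide field_simps)
  then have "cmod ((x - p) / u) = cmod ((x - p) / u - 1)"
    using pp' by (simp add: u_def)
  then have "g x = 1 / 2"
    by (simp add: g_def cmod_def power2_eq_square field_simps)
  moreover have "g p = 0" "g p' = 1"
    using pp' by (simp_all add: g_def u_def)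
  moreover have "Re (w / u) = Re (p / u) + g w" for w
    by (simp add: g_def diff_divide_distrib)
  then have "\<exists>w\<in>{p', x, y}. g w \<le> g p"
    using convex_hull_linear_ge_generator[OF linear_Re_divide hull] by (metis add_le_cancel_left)
  ultimately show False
    using g_y by auto
qed

lemma lessThan_4_eq_distinct:
  fixes a b c d :: nat
  assumes "a < 4" "b < 4" "c < 4" "d < 4" "distinct [a, b, c, d]"
  shows "{..<4} = {a, b, c, d}"
proof -
  have "{a, b, c, d} \<subseteq> {..<4::nat}" using assms by auto
  moreover have "card {a, b, c, d} = card {..<4::nat}" using assms(5) by simp
  ultimately show ?thesis by (metis card_subset_eq finite_lessThan)
qed

lemma lessThan_4_obtain_remaining:
  fixes a b :: nat
  assumes "a < 4" "b < 4" "a \<noteq> b"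
  obtains c d where "c < 4" "d < 4" "distinct [a, b, c, d]"
proof -
  have "card ({..<4::nat} - {a, b}) = 2" using assms by (simp add: card_Diff_subset)
  then obtain c d where "{..<4::nat} - {a, b} = {c, d}" "c \<noteq> d" by (auto simp: card_2_iff)
  then show ?thesis using assms that[of c d] by (auto dest!: equalityD2)
qed

lemma two_pairs_complement_equal:
  fixes m :: "nat \<Rightarrow> 'a"
  assumes "a < 4" "b < 4" "c < 4" "d < 4" "distinct [a, b, c, d]"
    and "a' < 4" "b' < 4" "c' < 4" "d' < 4" "distinct [a', b', c', d']"
    and "m a' = m b'" "m c' = m d'" "m c = m d"
  shows "m a = m b"
proof -
  have "{a, b, c, d} \<subseteq> {a', b', c', d'}"
    using lessThan_4_eq_distinct[OF assms(6-10)] assms(1-4) by auto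
  then show ?thesis using assms(5,10-13) by auto
qed

lemma mirror_pair_force_component:
  fixes h :: "complex \<Rightarrow> real" and q :: "nat \<Rightarrow> complex"
  assumes h: "linear h"
    and eq: "- (lam * m j) *\<^sub>R (q j - cm) =
      (\<Sum>i\<in>{k, c, d}. (m i * m j / (cmod (q i - q j)) ^ 3) *\<^sub>R (q i - q j))"
    and distinct: "distinct [k, c, d]" and "m j \<noteq> 0" "q j \<noteq> q c"
    and h_k: "h (q k - q j) = 0" and h_d: "h (q d - q j) = - h (q c - q j)"
    and equidistant: "dist (q j) (q d) = dist (q j) (q c)"
  shows "- lam * h (q j - cm) = (m c - m d) * h (q c - q j) / dist (q j) (q c) ^ 3"
proof -
  interpret h: linear h by (fact h)
  have r: "cmod (q c - q j) = dist (q j) (q c)" "cmod (q d - q j) = dist (q j) (q c)"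
    using equidistant by (metis dist_commute dist_norm)+
  have "- (lam * m j) * h (q j - cm) =
      m k * m j / cmod (q k - q j) ^ 3 * h (q k - q j) +
      (m c * m j / cmod (q c - q j) ^ 3 * h (q c - q j) +
       m d * m j / cmod (q d - q j) ^ 3 * h (q d - q j))"
    using arg_cong[OF eq, of h] distinct by (simp add: h.neg h.scale h.sum)
  then have "m j * (- lam * h (q j - cm)) = m j * ((m c - m d) * h (q c - q j) / dist (q j) (q c) ^ 3)"
    using \<open>q j \<noteq> q c\<close> by (simp add: h_k h_d r field_simps)
  then show ?thesis
    using \<open>m j \<noteq> 0\<close> by (simp only: mult_cancel_left) simp
qed

lemma central_configuration_axis_normal_forces:
  fixes m :: "nat \<Rightarrow> real" and q :: "nat \<Rightarrow> complex"
  assumes cc: "central_configuration m q"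
    and idx: "a < 4" "b < 4" "c < 4" "d < 4" "distinct [a, b, c, d]"
    and mass: "m a \<noteq> 0" "m b \<noteq> 0"
    and mirror: "reflect_line (q a) (q b) (q c) = q d"
  obtains lam where "\<And>j. j \<in> {a, b} \<Longrightarrow>
    - lam * Im ((q j - center_of_mass m q) / (q b - q a)) =
    (m c - m d) * Im ((q c - q a) / (q b - q a)) / dist (q j) (q c) ^ 3"
proof -
  have q_inj: "q i \<noteq> q j" if "i < 4" "j < 4" "i \<noteq> j" for i j
    using cc that unfolding central_configuration_def by blast
  then have ab: "q a \<noteq> q b"
    using idx by auto
  define u where "u = q b - q a"
  define h where "h w = Im (w / u)" for w
  interpret h: linear h
    unfolding h_def by (rule linear_Im_divide)
  have h_d: "h (q d - q a) = - h (q c - q a)"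
    using Im_reflect_line[OF ab, of "q c"] mirror by (simp add: h_def u_def)
  have h_axis: "h (q j - q a) = 0" if "j \<in> {a, b}" for j
    using that ab by (auto simp: h_def u_def)
  define cm where "cm = center_of_mass m q"
  obtain lam where eq: "\<forall>j<4. - (lam * m j) *\<^sub>R (q j - cm) =
      (\<Sum>i\<in>{..<4} - {j}. (m i * m j / (cmod (q i - q j)) ^ 3) *\<^sub>R (q i - q j))"
    using cc unfolding central_configuration_def cm_def by blast
  have "- lam * h (q j - cm) = (m c - m d) * h (q c - q a) / dist (q j) (q c) ^ 3"
    if j: "j \<in> {a, b}" for j
  proof -
    obtain k where k: "k \<in> {a, b}" "k \<noteq> j"
      using j idx(5) by auto
    have "j < 4"
      using j idx by auto
    moreover have "{..<4} - {j} = {k, c, d}"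
      using lessThan_4_eq_distinct[OF idx] j k idx(5) by auto
    ultimately have eq_j: "- (lam * m j) *\<^sub>R (q j - cm) =
        (\<Sum>i\<in>{k, c, d}. (m i * m j / (cmod (q i - q j)) ^ 3) *\<^sub>R (q i - q j))"
      using eq by simp
    have h_shift: "h (q i - q j) = h (q i - q a)" for i
      using h.diff[of "q i - q a" "q j - q a"] h_axis[OF j] by simp
    have "reflect_line (q a) (q b) (q j) = q j"
      using j by auto
    then have "dist (q j) (q d) = dist (q j) (q c)"
      using dist_reflect_line[OF ab, of "q j" "q c"] mirror by simp
    moreover have "distinct [k, c, d]" "m j \<noteq> 0" "q j \<noteq> q c"
      using j k idx mass q_inj by auto
    ultimately show ?thesis
      using mirror_pair_force_component[OF h.linear_axioms eq_j] h_axis[OF k(1)] h_d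
      by (simp add: h_shift)
  qed
  then show ?thesis
    unfolding h_def u_def cm_def by (rule that)
qed

lemma central_configuration_axis_balance:
  fixes m :: "nat \<Rightarrow> real" and q :: "nat \<Rightarrow> complex"
  assumes cc: "central_configuration m q"
    and idx: "a < 4" "b < 4" "c < 4" "d < 4" "distinct [a, b, c, d]"
    and mass: "m a \<noteq> 0" "m b \<noteq> 0"
    and mirror: "reflect_line (q a) (q b) (q c) = q d"
  shows "m c = m d \<or> dist (q a) (q c) = dist (q b) (q c)"
proof -
  have ab: "q a \<noteq> q b" and "q c \<noteq> q d"
    using cc idx unfolding central_configuration_def by auto
  define u where "u = q b - q a"
  define cm where "cm = center_of_mass m q"
  define t where "t = Im ((q c - q a) / u)"
  obtain lam where normal: "\<And>j. j \<in> {a, b} \<Longrightarrow>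
      - lam * Im ((q j - cm) / u) = (m c - m d) * t / dist (q j) (q c) ^ 3"
    using central_configuration_axis_normal_forces[OF cc idx mass mirror]
    unfolding u_def cm_def t_def by blast
  have "t \<noteq> 0"
    using reflect_line_fixed_iff[OF ab, of "q c"] mirror \<open>q c \<noteq> q d\<close> by (simp add: t_def u_def)
  have "Im ((q b - cm) / u) - Im ((q a - cm) / u) = Im ((q b - q a) / u)"
    by (simp add: diff_divide_distrib)
  also have "\<dots> = 0"
    using ab by (simp add: u_def)
  finally have "(m c - m d) * t / dist (q a) (q c) ^ 3 = (m c - m d) * t / dist (q b) (q c) ^ 3"
    using normal[of a] normal[of b] by simp
  then show ?thesis
    using \<open>t \<noteq> 0\<close> by (auto simp: divide_cancel_left power_eq_iff_eq_base)
qed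

lemma is_kite_obtain_axis:
  fixes q :: "nat \<Rightarrow> complex"
  assumes q_inj: "\<forall>i<4. \<forall>j<4. i \<noteq> j \<longrightarrow> q i \<noteq> q j" and kite: "is_kite q"
  obtains a b c d where "a < 4" "b < 4" "c < 4" "d < 4" "distinct [a, b, c, d]"
    "reflect_line (q a) (q b) (q c) = q d"
proof -
  obtain a b where a: "a < 4" and b: "b < 4" and "a \<noteq> b"
    and invariant: "reflect_line (q a) (q b) ` (q ` {..<4}) = q ` {..<4}"
    using kite unfolding is_kite_def by blast
  obtain c d where c: "c < 4" and d: "d < 4" and idx: "distinct [a, b, c, d]"
    using lessThan_4_obtain_remaining[OF a b \<open>a \<noteq> b\<close>] .
  have univ: "{..<4} = {a, b, c, d}"
    using lessThan_4_eq_distinct[OF a b c d idx] .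
  have distinct: "distinct [q a, q b, q c, q d]"
    using q_inj a b c d idx by auto
  have "\<not> collinear {q a, q b, q c, q d}"
    using kite univ unfolding is_kite_def by simp
  then have "reflect_line (q a) (q b) (q c) = q d"
    using reflect_line_swaps_off_axis[OF distinct] invariant univ by simp
  then show ?thesis
    using that a b c d idx by blast
qed

lemma concave_kite_interior_body_on_axis:
  fixes q :: "nat \<Rightarrow> complex"
  assumes q_inj: "\<forall>i<4. \<forall>j<4. i \<noteq> j \<longrightarrow> q i \<noteq> q j"
    and kite: "is_kite q" and concave: "is_concave q"
  obtains a b c d where "a < 4" "b < 4" "c < 4" "d < 4" "distinct [a, b, c, d]"
    "reflect_line (q a) (q b) (q c) = q d"
    "q a \<in> interior (convex hull {q b, q c, q d})"
proof -
  obtain a b c d where a: "a < 4" and b: "b < 4" and c: "c < 4" and d: "d < 4"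
    and idx: "distinct [a, b, c, d]" and mirror: "reflect_line (q a) (q b) (q c) = q d"
    using is_kite_obtain_axis[OF q_inj kite] .
  have univ: "{..<4} = {a, b, c, d}"
    using lessThan_4_eq_distinct[OF a b c d idx] .
  have ab: "q a \<noteq> q b" and "q c \<noteq> q d"
    using q_inj a b c d idx by auto
  have mirror': "reflect_line (q a) (q b) (q d) = q c"
    using reflect_line_involutive[OF ab] mirror by metis
  obtain i where "i < 4" and interior: "q i \<in> interior (convex hull (q ` ({..<4} - {i})))"
    using concave unfolding is_concave_def by blast
  then have hull: "q i \<in> convex hull (q ` ({..<4} - {i}))"
    using interior_subset by blast
  have "i \<noteq> c"
  proof
    assume "i = c"
    then have "q c \<in> convex hull {q a, q b, q d}"
      using hull univ idx by (simp add: insert_Diff_if)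
    then show False
      using reflect_line_mirror_not_in_convex_hull[OF ab mirror \<open>q c \<noteq> q d\<close>] by blast
  qed
  moreover have "i \<noteq> d"
  proof
    assume "i = d"
    then have "q d \<in> convex hull {q a, q b, q c}"
      using hull univ idx by (simp add: insert_Diff_if)
    then show False
      using reflect_line_mirror_not_in_convex_hull[OF ab mirror'] \<open>q c \<noteq> q d\<close> by metis
  qed
  ultimately consider "i = a" | "i = b"
    using \<open>i < 4\<close> univ by blast
  then show ?thesis
  proof cases
    case 1
    then show ?thesis
      using that[OF a b c d idx mirror] interior univ idx by (simp add: insert_Diff_if)
  next
    case 2
    then have "q b \<in> interior (convex hull {q a, q c, q d})"
      using interior univ idx by (simp add: insert_Diff_if)
    then show ?thesis
      using that[OF b a c d] idx mirror by (simp add: reflect_line_commute)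
  qed
qed

lemma central_configuration_mirror_masses_eq:
  fixes m :: "nat \<Rightarrow> real" and q :: "nat \<Rightarrow> complex"
  assumes cc: "central_configuration m q"
    and idx: "a < 4" "b < 4" "c < 4" "d < 4" "distinct [a, b, c, d]"
    and mass: "m a \<noteq> 0" "m b \<noteq> 0"
    and mirror: "reflect_line (q a) (q b) (q c) = q d"
    and interior: "q a \<in> interior (convex hull {q b, q c, q d})"
  shows "m c = m d"
proof (rule ccontr)
  assume "m c \<noteq> m d"
  then have "dist (q a) (q c) = dist (q b) (q c)"
    using central_configuration_axis_balance[OF cc idx mass mirror] by blast
  moreover have "q a \<noteq> q b"
    using cc idx unfolding central_configuration_def by auto
  ultimately have "q a \<notin> convex hull {q b, q c, q d}"
    using reflect_line_axis_point_not_in_convex_hull mirror by blast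
  then show False
    using interior interior_subset by blast
qed

theorem proposition1:
  fixes m :: "nat \<Rightarrow> real" and q :: "nat \<Rightarrow> complex" and \<mu> :: real
  assumes mu_pos: "\<mu> > 0"
    and masses: "\<exists>a<4. \<exists>b<4. \<exists>c<4. \<exists>d<4. distinct [a, b, c, d] \<and>
                   m a = 1 \<and> m b = 1 \<and> m c = \<mu> \<and> m d = \<mu>"
    and cc: "central_configuration m q"
    and kite: "is_kite q"
    and concave: "is_concave q"
  shows "\<exists>i<4. \<exists>j<4. \<exists>k<4. \<exists>l<4. distinct [i, j, k, l] \<and>
           m i = m j \<and> m k = m l \<and>
           dist (q k) (q i) = dist (q k) (q j) \<and>
           dist (q l) (q i) = dist (q l) (q j) \<and>
           q l \<in> interior (convex hull {q i, q j, q k})"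
proof -
  have q_inj: "\<forall>i<4. \<forall>j<4. i \<noteq> j \<longrightarrow> q i \<noteq> q j"
    using cc unfolding central_configuration_def by blast
  obtain a b c d where idx: "a < 4" "b < 4" "c < 4" "d < 4" "distinct [a, b, c, d]"
    and mirror: "reflect_line (q a) (q b) (q c) = q d"
    and interior: "q a \<in> interior (convex hull {q b, q c, q d})"
    using concave_kite_interior_body_on_axis[OF q_inj kite concave] by blast
  obtain a' b' c' d' where idx': "a' < 4" "b' < 4" "c' < 4" "d' < 4" "distinct [a', b', c', d']"
    and m': "m a' = 1" "m b' = 1" "m c' = \<mu>" "m d' = \<mu>"
    using masses by blast
  have m_nonzero: "m i \<noteq> 0" if "i < 4" for i
  proof -
    have "i \<in> {a', b', c', d'}"
      using lessThan_4_eq_distinct[OF idx'] that by blast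
    then show ?thesis
      using m' mu_pos by auto
  qed
  have ab: "q a \<noteq> q b"
    using q_inj idx by auto
  have "m c = m d"
    using central_configuration_mirror_masses_eq[OF cc idx m_nonzero[OF idx(1)] m_nonzero[OF idx(2)]
        mirror interior] .
  moreover have "m a = m b"
    using two_pairs_complement_equal[OF idx idx', of m] m' \<open>m c = m d\<close> by simp
  moreover have "dist (q a) (q c) = dist (q a) (q d)" "dist (q b) (q c) = dist (q b) (q d)"
    using dist_axis_reflect_line[OF ab, of "q c"] mirror by simp_all
  moreover have "q a \<in> interior (convex hull {q c, q d, q b})"
    using interior by (simp add: insert_commute)
  moreover have "distinct [c, d, b, a]"
    using idx(5) by auto
  ultimately show ?thesis
    using idx(1-4) by (intro exI[of _ c] exI[of _ d] exI[of _ b] exI[of _ a] conjI; simp?)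
qed

end
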